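(* Let $M=(I,T)$ be a symbolic transition system with $T = A_1 \vee \dots \vee A_k$, and let $(V_L \cup V_A, E)$ be an inductive proof graph for $M$ that is valid. Suppose that $I \Rightarrow L$ holds for every $L \in V_L$. Then every $L \in V_L$ is an invariant of $M$, i.e. $L$ holds in every reachable state of $M$.
   Context: A symbolic transition system $M=(I,T)$ consists of a state predicate $I$ (initial states) over a finite set of state variables and a transition relation $T$, a predicate over current-state variables and primed next-state copies of them; for a state predicate $P$, $P'$ denotes $P$ with every state variable replaced by its primed version. The transition relation is a disjunction of actions, $T = A_1 \vee \dots \vee A_k$. The behaviors of $M$ are sequences of states $\sigma_1 \to \sigma_2 \to \cdots$ with $\sigma_1$ satisfying $I$ and every pair $(\sigma_i,\sigma_{i+1})$ satisfying $T$; a state is reachable if it occurs in some behavior; an invariant is a state predicate true in every reachable state. An inductive proof graph for $M$ is a directed graph $(V,E)$ with $V = V_L \cup V_A$, where $V_L$ (lemma nodes) is a set of state predicates over $M$, $V_A = V_L \times \{A_1,\dots,A_k\}$ (action nodes), and $E \subseteq V_L \times V_A$ (lemma support edges). For an action node $(L,A)$, its support set is $Supp_{(L,A)} = \{\ell \in V_L : (\ell,(L,A)) \in E\}$; the action node is locally valid if $\left(\bigwedge_{\ell \in Supp_{(L,A)}} \ell\right) \wedge L \wedge A \Rightarrow L'$ is valid. A lemma node $L$ is locally valid if all action nodes $(L,A_1),\dots,(L,A_k)$ are locally valid. The graph is valid if every lemma node in $V_L$ is locally valid. *)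

theory Defs
  imports Main
begin

text \<open>A state predicate is a function 's \<Rightarrow> bool; an action (and the transition relation)
  is a relation 's \<Rightarrow> 's \<Rightarrow> bool between current and next (primed) state.\<close>

type_synonym 's pred = "'s \<Rightarrow> bool"
type_synonym 's action = "'s \<Rightarrow> 's \<Rightarrow> bool"

definition trans_rel :: "'s action list \<Rightarrow> 's action" where
  "trans_rel acts s t \<longleftrightarrow> (\<exists>A\<in>set acts. A s t)"

definition is_behavior :: "'s pred \<Rightarrow> 's action list \<Rightarrow> 's list \<Rightarrow> bool" where
  "is_behavior I acts \<sigma> \<longleftrightarrow> \<sigma> \<noteq> [] \<and> I (hd \<sigma>) \<and>
     (\<forall>i. Suc i < length \<sigma> \<longrightarrow> trans_rel acts (\<sigma> ! i) (\<sigma> ! Suc i))"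

definition reachable :: "'s pred \<Rightarrow> 's action list \<Rightarrow> 's \<Rightarrow> bool" where
  "reachable I acts s \<longleftrightarrow> (\<exists>\<sigma>. is_behavior I acts \<sigma> \<and> s \<in> set \<sigma>)"

definition is_invariant :: "'s pred \<Rightarrow> 's action list \<Rightarrow> 's pred \<Rightarrow> bool" where
  "is_invariant I acts P \<longleftrightarrow> (\<forall>s. reachable I acts s \<longrightarrow> P s)"

definition action_nodes :: "'s pred set \<Rightarrow> 's action list \<Rightarrow> ('s pred \<times> 's action) set" where
  "action_nodes VL acts = VL \<times> set acts"

definition is_proof_graph ::
  "'s pred set \<Rightarrow> 's action list \<Rightarrow> ('s pred \<times> ('s pred \<times> 's action)) set \<Rightarrow> bool" where
  "is_proof_graph VL acts E \<longleftrightarrow> E \<subseteq> VL \<times> action_nodes VL acts"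

definition supp ::
  "'s pred set \<Rightarrow> ('s pred \<times> ('s pred \<times> 's action)) set \<Rightarrow> 's pred \<Rightarrow> 's action \<Rightarrow> 's pred set" where
  "supp VL E L A = {l \<in> VL. (l, (L, A)) \<in> E}"

definition action_node_locally_valid ::
  "'s pred set \<Rightarrow> ('s pred \<times> ('s pred \<times> 's action)) set \<Rightarrow> 's pred \<Rightarrow> 's action \<Rightarrow> bool" where
  "action_node_locally_valid VL E L A \<longleftrightarrow>
     (\<forall>s t. (\<forall>l\<in>supp VL E L A. l s) \<and> L s \<and> A s t \<longrightarrow> L t)"

definition lemma_node_locally_valid ::
  "'s pred set \<Rightarrow> 's action list \<Rightarrow> ('s pred \<times> ('s pred \<times> 's action)) set \<Rightarrow> 's pred \<Rightarrow> bool" where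
  "lemma_node_locally_valid VL acts E L \<longleftrightarrow>
     (\<forall>A\<in>set acts. action_node_locally_valid VL E L A)"

definition proof_graph_valid ::
  "'s pred set \<Rightarrow> 's action list \<Rightarrow> ('s pred \<times> ('s pred \<times> 's action)) set \<Rightarrow> bool" where
  "proof_graph_valid VL acts E \<longleftrightarrow> (\<forall>L\<in>VL. lemma_node_locally_valid VL acts E L)"

end

theory Submission
  imports Defs
begin

text \<open>The conjunction of all lemma nodes holds initially, and it is inductive: a transition
  is an instance of some action A, and for every lemma L the action node (L, A) is locally
  valid with a support set contained in the conjunction. An inductive predicate that holds
  initially is an invariant, hence so is each of its conjuncts.\<close>

lemma behavior_nth_if_inductive:
  assumes beh: "is_behavior I acts \<sigma>"
    and init: "\<And>s. I s \<Longrightarrow> P s"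
    and step: "\<And>s t. P s \<Longrightarrow> trans_rel acts s t \<Longrightarrow> P t"
  shows "i < length \<sigma> \<Longrightarrow> P (\<sigma> ! i)"
proof (induction i)
  case 0
  from beh have "\<sigma> \<noteq> []" "I (hd \<sigma>)" by (simp_all add: is_behavior_def)
  then show ?case by (metis hd_conv_nth init)
next
  case (Suc i)
  with beh have "trans_rel acts (\<sigma> ! i) (\<sigma> ! Suc i)" by (simp add: is_behavior_def)
  moreover from Suc have "P (\<sigma> ! i)" by simp
  ultimately show ?case by (rule step[rotated])
qed

lemma invariant_if_inductive:
  assumes "\<And>s. I s \<Longrightarrow> P s"
    and "\<And>s t. P s \<Longrightarrow> trans_rel acts s t \<Longrightarrow> P t"
  shows "is_invariant I acts P"
  unfolding is_invariant_def reachable_def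
proof (intro allI impI, elim exE conjE)
  fix s \<sigma> assume beh: "is_behavior I acts \<sigma>" and "s \<in> set \<sigma>"
  then obtain i where "i < length \<sigma>" "s = \<sigma> ! i" by (auto simp: in_set_conv_nth)
  with behavior_nth_if_inductive[OF beh assms] show "P s" by simp
qed

lemma proof_graph_valid_step:
  assumes valid: "proof_graph_valid VL acts E"
    and pre: "\<forall>L\<in>VL. L s"
    and trans: "trans_rel acts s t"
  shows "\<forall>L\<in>VL. L t"
proof
  fix L assume "L \<in> VL"
  from trans obtain A where A: "A \<in> set acts" "A s t" by (auto simp: trans_rel_def)
  with valid \<open>L \<in> VL\<close> have "action_node_locally_valid VL E L A"
    by (simp add: proof_graph_valid_def lemma_node_locally_valid_def)
  moreover have "\<forall>l\<in>supp VL E L A. l s" using pre unfolding supp_def by blast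
  moreover have "L s" using pre \<open>L \<in> VL\<close> ..
  ultimately show "L t" using A(2) unfolding action_node_locally_valid_def by blast
qed

theorem theorem4p6:
  fixes I :: "'s pred" and acts :: "'s action list"
    and VL :: "'s pred set" and E :: "('s pred \<times> ('s pred \<times> 's action)) set"
  assumes "is_proof_graph VL acts E"
    and "proof_graph_valid VL acts E"
    and "\<forall>L\<in>VL. \<forall>s. I s \<longrightarrow> L s"
  shows "\<forall>L\<in>VL. is_invariant I acts L"
proof -
  have "is_invariant I acts (\<lambda>s. \<forall>L\<in>VL. L s)"
  proof (rule invariant_if_inductive)
    show "\<forall>L\<in>VL. L s" if "I s" for s using assms(3) that by blast
    show "\<forall>L\<in>VL. L t" if "\<forall>L\<in>VL. L s" "trans_rel acts s t" for s t
      using proof_graph_valid_step[OF assms(2) that] .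
  qed
  then show ?thesis unfolding is_invariant_def by blast
qed

end
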